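(* Let $R$ be the stability function of an $L$-stable one-step method, i.e. $|R(z)| \le 1$ for all $z \in \mathbb{C}$ with $\operatorname{Re} z \le 0$ and $R(z) \to 0$ as $z \to \infty$. For fixed $\gamma \in \mathbb{R}$ let $R_\gamma(z) = 1 + \gamma(R(z) - 1)$ be the stability function of the relaxed update $u^{n+1}_\gamma = u^n + \gamma(u^{n+1} - u^n)$. If $R_\gamma$ is $A$-stable (i.e. $|R_\gamma(z)| \le 1$ for all $z$ with $\operatorname{Re} z \le 0$), then $\gamma \le 2$.
   Context: Applying the baseline method to $u' = \lambda u$, $\lambda \in \mathbb{C}$, yields $u^{n+1} = R(z) u^n$ with $z = \lambda \Delta t$; here $R$ is a rational function, as for (multiderivative) Runge-Kutta methods. *)

theory Defs
  imports "HOL-Analysis.Analysis" "HOL-Computational_Algebra.Polynomial"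
begin

text \<open>A stability function given as a rational function p/q (division by zero yields 0).\<close>
definition rat_fun :: "complex poly \<Rightarrow> complex poly \<Rightarrow> complex \<Rightarrow> complex" where
  "rat_fun p q = (\<lambda>z. poly p z / poly q z)"

definition A_stable :: "(complex \<Rightarrow> complex) \<Rightarrow> bool" where
  "A_stable R \<longleftrightarrow> (\<forall>z. Re z \<le> 0 \<longrightarrow> cmod (R z) \<le> 1)"

definition L_stable :: "(complex \<Rightarrow> complex) \<Rightarrow> bool" where
  "L_stable R \<longleftrightarrow> A_stable R \<and> (R \<longlongrightarrow> 0) at_infinity"

definition relaxed :: "real \<Rightarrow> (complex \<Rightarrow> complex) \<Rightarrow> complex \<Rightarrow> complex" where
  "relaxed \<gamma> R = (\<lambda>z. 1 + complex_of_real \<gamma> * (R z - 1))"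

end

theory Submission
  imports Defs
begin

text \<open>Along the negative real axis the relaxed function tends to \<open>1 - \<gamma>\<close>, the value
  \<open>R\<^sub>\<gamma>(\<infinity>)\<close>, and A-stability bounds the modulus of every such limit by 1.\<close>

lemma filterlim_neg_of_real_at_infinity:
  "filterlim (\<lambda>t::real. - complex_of_real t) at_infinity at_top"
  by (intro filterlim_norm_at_top_imp_at_infinity) (simp add: filterlim_abs_real)

lemma A_stable_tendsto_at_infinity_norm_le_1:
  assumes "A_stable R" and "(R \<longlongrightarrow> c) at_infinity"
  shows "cmod c \<le> 1"
proof -
  have lim: "((\<lambda>t. R (- complex_of_real t)) \<longlongrightarrow> c) at_top"
    using filterlim_compose[OF assms(2) filterlim_neg_of_real_at_infinity] by simp
  have bound: "eventually (\<lambda>t. cmod (R (- complex_of_real t)) \<le> 1) at_top"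
    using eventually_ge_at_top[of "0::real"]
    by eventually_elim (use assms(1) in \<open>simp add: A_stable_def\<close>)
  show ?thesis
    by (rule tendsto_upperbound[OF tendsto_norm[OF lim] bound]) simp
qed

lemma tendsto_relaxed:
  assumes "(R \<longlongrightarrow> c) F"
  shows "(relaxed \<gamma> R \<longlongrightarrow> 1 + complex_of_real \<gamma> * (c - 1)) F"
  unfolding relaxed_def using assms by (intro tendsto_intros)

text \<open>Only \<open>R(\<infinity>) = 0\<close> is used.\<close>

theorem theorem4p4:
  fixes p q :: "complex poly" and \<gamma> :: real
  assumes "q \<noteq> 0"
    and "L_stable (rat_fun p q)"
    and "A_stable (relaxed \<gamma> (rat_fun p q))"
  shows "\<gamma> \<le> 2"
proof -
  have "(rat_fun p q \<longlongrightarrow> 0) at_infinity"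
    using assms(2) by (simp add: L_stable_def)
  then have "(relaxed \<gamma> (rat_fun p q) \<longlongrightarrow> complex_of_real (1 - \<gamma>)) at_infinity"
    using tendsto_relaxed by fastforce
  then have "cmod (complex_of_real (1 - \<gamma>)) \<le> 1"
    using assms(3) A_stable_tendsto_at_infinity_norm_le_1 by blast
  then have "\<bar>1 - \<gamma>\<bar> \<le> 1"
    by (simp only: norm_of_real)
  then show ?thesis
    by linarith
qed

end
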